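(* Let $c>0$ and consider the function $$F(L,L_2)=\frac{L^3L_2(3L+2L_2)}{(2L+L_2)^4}$$ on the set $\{(L,L_2): L>0,\ L_2>0,\ 2L+L_2=c\}$. Then $F$ has a unique maximizer on this set, given by $$L^*=c\Bigl(1-\sqrt{\tfrac{2}{5}}\Bigr),\qquad L_2^*=c\Bigl(2\sqrt{\tfrac{2}{5}}-1\Bigr),$$ so that the optimal ratio is $\dfrac{L_2^*}{L^*}=\dfrac{\sqrt{10}-1}{3}\approx 0.721$.
   Context: This concerns Purcell's three-link swimmer: a planar swimmer made of three rigid segments joined end to end, with two outer links of length $L$ and a central link of length $L_2$, total length $2L+L_2=c$. In the paper, $F(L,L_2)$ multiplied by $\frac{\eta-\xi}{\xi}$ (with $\xi,\eta$ the tangential and normal drag coefficients of Resistive Force Theory) is the $x$-component of the Lie bracket $[\mathbf g_1,\mathbf g_2]$ of the swimmer's control vector fields at the straight configuration, which is the leading-order coefficient of the $x$-displacement produced by a small stroke (closed curve in the joint-angle plane); maximizing $F$ under the fixed total length constraint yields the optimal link-length ratio. *)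

theory Defs
  imports Complex_Main
begin

definition F :: "real \<Rightarrow> real \<Rightarrow> real" where
  "F L L2 = L^3 * L2 * (3*L + 2*L2) / (2*L + L2)^4"

definition feasible :: "real \<Rightarrow> real \<times> real \<Rightarrow> bool" where
  "feasible c p \<longleftrightarrow> fst p > 0 \<and> snd p > 0 \<and> 2 * fst p + snd p = c"

end

theory Submission
  imports Defs
begin

text \<open>
  F is positively homogeneous of degree one, so on the constraint set, parametrised as
  (L, L2) = (c x, c (1 - 2x)) with 0 < x < 1/2, it equals c times the polynomial
  x^3 (1 - 2x) (2 - x). The root a = 1 - sqrt (2/5) of 5a^2 - 10a + 3, which is the
  critical point of that polynomial in (0, 1/2), is a strict global maximiser there because
  the difference of the values at a and at x factors as -(x - a)^2 q(x) with q negative.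
\<close>

lemma maximisers_eq_singleton:
  assumes "P a" and "\<And>q. P q \<Longrightarrow> q \<noteq> a \<Longrightarrow> f q < (f a :: 'b :: linorder)"
  shows "{p. P p \<and> (\<forall>q. P q \<longrightarrow> f q \<le> f p)} = {a}"
  using assms by (force simp: not_le)

lemma F_scale: "F (c * L) (c * L2) = c * F L L2" if "c \<noteq> 0"
proof -
  have "F (c * L) (c * L2) = c^5 * (L^3 * L2 * (3*L + 2*L2)) / (c^4 * (2*L + L2)^4)"
    unfolding F_def by (simp add: power_mult_distrib algebra_simps eval_nat_numeral)
  also have "\<dots> = c * F L L2"
    using that unfolding F_def by (simp add: eval_nat_numeral)
  finally show ?thesis .
qed

lemma F_unit_length: "F x (1 - 2*x) = x^3 * (1 - 2*x) * (2 - x)"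
  unfolding F_def by (simp add: algebra_simps)

lemma feasible_iff:
  assumes "c > 0"
  shows "feasible c p \<longleftrightarrow> (\<exists>x. 0 < x \<and> x < 1/2 \<and> p = (c * x, c * (1 - 2*x)))"
proof
  assume "feasible c p"
  then show "\<exists>x. 0 < x \<and> x < 1/2 \<and> p = (c * x, c * (1 - 2*x))"
    using assms by (intro exI[of _ "fst p / c"]) (auto simp: feasible_def field_simps prod_eq_iff)
qed (use assms in \<open>auto simp: feasible_def algebra_simps\<close>)

lemma profile_strict_max:
  fixes a x :: real
  assumes root: "5*a^2 - 10*a + 3 = 0" and a: "0 < a" "a \<le> 1/2"
    and x: "0 < x" "x < 1/2" "x \<noteq> a"
  shows "x^3 * (1 - 2*x) * (2 - x) < a^3 * (1 - 2*a) * (2 - a)"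
proof -
  define q where "q = 2*x^3 + (4*a - 5)*x^2 + (6*a^2 - 10*a + 2)*x + a*(8*a^2 - 15*a + 4)"
  have "a^3 * (1 - 2*a) * (2 - a) - x^3 * (1 - 2*x) * (2 - x) + (x - a)^2 * q
          = 2*a^2*(a - x)*(5*a^2 - 10*a + 3)"
    unfolding q_def by (simp add: power2_eq_square power3_eq_cube algebra_simps)
  then have diff: "a^3 * (1 - 2*a) * (2 - a) - x^3 * (1 - 2*x) * (2 - x) = -((x - a)^2 * q)"
    using root by simp
  have a2: "a^2 = 2*a - 3/5" using root by linarith
  have "2*x^3 \<le> x^2"
    using mult_right_mono[of "2*x" 1 "x^2"] x by (simp add: power2_eq_square power3_eq_cube)
  moreover have "(4*a - 5)*x^2 \<le> -3*x^2" using a by (intro mult_right_mono) auto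
  moreover have "(6*a^2 - 10*a + 2)*x < 0" using a2 a x by (simp add: mult_neg_pos)
  moreover have "a*(8*a^2 - 15*a + 4) < 0" using a2 a by (simp add: mult_pos_neg)
  ultimately have "q < 0" unfolding q_def by (smt (verit) zero_le_power2)
  moreover have "(x - a)^2 > 0" using x by simp
  ultimately show ?thesis using diff by (smt (verit) mult_pos_neg)
qed

lemma sqrt_two_fifths_bounds: "1/2 < sqrt (2/5::real)" "sqrt (2/5::real) < 1"
proof -
  show "1/2 < sqrt (2/5::real)" by (rule real_less_rsqrt) (simp add: power2_eq_square)
  show "sqrt (2/5::real) < 1" by simp
qed

lemma optimal_ratio: "(2 * sqrt (2/5) - 1) / (1 - sqrt (2/5)) = (sqrt 10 - 1) / (3::real)"
proof -
  define s where "s = sqrt (2/5::real)"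
  have "sqrt 10 = sqrt (25 * (2/5::real))" by simp
  then have sqrt10: "sqrt 10 = 5 * s" unfolding s_def real_sqrt_mult by simp
  have "(5*s - 1) * (1 - s) = 3 * (2*s - 1)"
    using real_sqrt_pow2[of "2/5"] unfolding s_def[symmetric]
    by (simp add: algebra_simps power2_eq_square)
  moreover have "1 - s \<noteq> 0" using sqrt_two_fifths_bounds(2) s_def by simp
  ultimately show ?thesis unfolding sqrt10 s_def[symmetric] by (simp add: field_simps)
qed

theorem mainTheorem1:
  fixes c :: real
  assumes "c > 0"
  shows "{p. feasible c p \<and> (\<forall>q. feasible c q \<longrightarrow> F (fst q) (snd q) \<le> F (fst p) (snd p))}
           = {(c * (1 - sqrt (2/5)), c * (2 * sqrt (2/5) - 1))}
         \<and> (c * (2 * sqrt (2/5) - 1)) / (c * (1 - sqrt (2/5))) = (sqrt 10 - 1) / 3"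
proof
  define a where "a = 1 - sqrt (2/5::real)"
  have a: "0 < a" "a < 1/2" "5*a^2 - 10*a + 3 = 0"
    using sqrt_two_fifths_bounds unfolding a_def by (auto simp: power2_eq_square algebra_simps)
  have F_param: "F (c * x) (c * (1 - 2*x)) = c * (x^3 * (1 - 2*x) * (2 - x))" for x
    using assms by (simp add: F_scale F_unit_length)
  have "{p. feasible c p \<and> (\<forall>q. feasible c q \<longrightarrow> F (fst q) (snd q) \<le> F (fst p) (snd p))}
          = {(c * a, c * (1 - 2*a))}"
  proof (rule maximisers_eq_singleton)
    show "feasible c (c * a, c * (1 - 2*a))" using a assms by (auto simp: feasible_iff)
    fix q assume "feasible c q" and "q \<noteq> (c * a, c * (1 - 2*a))"
    then obtain x where "0 < x" "x < 1/2" "x \<noteq> a" "q = (c * x, c * (1 - 2*x))"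
      using assms by (auto simp: feasible_iff)
    then show "F (fst q) (snd q) < F (fst (c * a, c * (1 - 2*a))) (snd (c * a, c * (1 - 2*a)))"
      using profile_strict_max[OF a(3) a(1)] a(2) assms by (simp add: F_param mult.assoc)
  qed
  then show "{p. feasible c p \<and> (\<forall>q. feasible c q \<longrightarrow> F (fst q) (snd q) \<le> F (fst p) (snd p))}
               = {(c * (1 - sqrt (2/5)), c * (2 * sqrt (2/5) - 1))}"
    by (simp add: a_def algebra_simps)
  show "(c * (2 * sqrt (2/5) - 1)) / (c * (1 - sqrt (2/5))) = (sqrt 10 - 1) / 3"
    using assms optimal_ratio by simp
qed

end
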